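(* There is a constant $C=C(n,m,\alpha)>0$ such that for all $x,y\in\mathbb{R}^n_+$, $x\neq y$, $$G_{2t}^+(x,y)\le\frac{C}{|x-y|^{n-2t}}.$$
   Context: $n\ge2$, $m\in\mathbb{N}$, $2m<n$, $0<\alpha<2$, $t=m+\alpha/2<n/2$. $\mathbb{R}^n_+=\{x: x_n>0\}$. $G_{2m}^+(x,y)=c_{n,m}(|x-y|^{2m-n}-|x^*-y|^{2m-n})$, $x^*=(x',-x_n)$; $G_\alpha^+(x,y)=\frac{A_{n,\alpha}}{s^{(n-\alpha)/2}}\Big[1-\frac{B_{n,\alpha}}{(s+\tau)^{(n-2)/2}}\int_0^{s/\tau}\frac{(s-\tau b)^{(n-2)/2}}{b^{\alpha/2}(1+b)}db\Big]$ with $s=|x-y|^2$, $\tau=4x_ny_n$ (Green's function of $(-\Delta)^{\alpha/2}$ on $\mathbb{R}^n_+$); $G_{2t}^+(x,y)=\int_{\mathbb{R}^n_+}G_{2m}^+(x,z)G_\alpha^+(z,y)dz$. *)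

theory Defs
  imports "HOL-Analysis.Analysis"
begin

text \<open>Ambient space R^n is real^'n (n = CARD('n)); the half space is
  {x. x $ k > 0} for a distinguished coordinate k (playing the role of x_n).\<close>

definition half_space :: "'n::finite \<Rightarrow> (real^'n) set" where
  "half_space k = {x. x $ k > 0}"

definition refl_pt :: "'n::finite \<Rightarrow> real^'n \<Rightarrow> real^'n" where
  "refl_pt k x = (\<chi> i. if i = k then - (x $ i) else x $ i)"

definition c_const :: "real \<Rightarrow> nat \<Rightarrow> real" where
  "c_const n m = Gamma (n/2 - real m) / (4 ^ m * pi powr (n/2) * Gamma (real m))"

definition A_const :: "real \<Rightarrow> real \<Rightarrow> real" where
  "A_const n \<alpha> = Gamma ((n - \<alpha>)/2) / (2 powr \<alpha> * pi powr (n/2) * Gamma (\<alpha>/2))"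

definition B_const :: "real \<Rightarrow> real \<Rightarrow> real" where
  "B_const n \<alpha> = sin (pi * \<alpha> / 2) / pi"

definition G2m_half :: "'n::finite \<Rightarrow> nat \<Rightarrow> real^'n \<Rightarrow> real^'n \<Rightarrow> real" where
  "G2m_half k m x y =
     c_const (real CARD('n)) m *
       (dist x y powr (2 * real m - real CARD('n))
        - dist (refl_pt k x) y powr (2 * real m - real CARD('n)))"

definition Galpha_half :: "'n::finite \<Rightarrow> real \<Rightarrow> real^'n \<Rightarrow> real^'n \<Rightarrow> real" where
  "Galpha_half k \<alpha> x y =
     (let n = real CARD('n); s = (dist x y)\<^sup>2; \<tau> = 4 * (x $ k) * (y $ k) in
      A_const n \<alpha> / s powr ((n - \<alpha>) / 2) *
      (1 - B_const n \<alpha> / (s + \<tau>) powr ((n - 2) / 2) *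
         (LBINT b=0..s/\<tau>. (s - \<tau> * b) powr ((n - 2) / 2) / (b powr (\<alpha>/2) * (1 + b)))))"

definition G2t_half :: "'n::finite \<Rightarrow> nat \<Rightarrow> real \<Rightarrow> real^'n \<Rightarrow> real^'n \<Rightarrow> real" where
  "G2t_half k m \<alpha> x y =
     set_lebesgue_integral lborel (half_space k) (\<lambda>z. G2m_half k m x z * Galpha_half k \<alpha> z y)"

end

theory Submission
  imports Defs
begin

text \<open>
  The reflected term of \<open>G_2m\<close> and the correction term of \<open>G_\<alpha>\<close> are nonnegative, so
  \<open>0 \<le> G_2m(x,z) \<le> c |x - z|^(2m - n)\<close> and \<open>G_\<alpha>(z,y) \<le> A |z - y|^(\<alpha> - n)\<close>: the function
  \<open>G_2t\<close> is dominated by the composition of two Riesz kernels. For \<open>a, b > 0\<close> with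
  \<open>a + b < n\<close> and \<open>h = |x - y|/2\<close>, the integrand \<open>|x - z|^(a - n) |z - y|^(b - n)\<close> is bounded
  by a multiple of a single radial kernel on each of \<open>B(y,h)\<close>, \<open>B(x,h)\<close> and the rest of space.
  Summing the radial integrals over dyadic shells bounds each piece by a constant times a power
  of \<open>h\<close>, and the powers combine to \<open>K |x - y|^(a + b - n)\<close>.
\<close>

lemma exists_dyadic_index:
  fixes t :: real
  assumes "1 \<le> t"
  shows "\<exists>J::nat. 2 powr J \<le> t \<and> t < 2 powr (real J + 1)"
proof -
  define J where "J = nat \<lfloor>log 2 t\<rfloor>"
  have "0 \<le> log 2 t" using assms by simp
  then have "real J \<le> log 2 t" "log 2 t < real J + 1"
    unfolding J_def by linarith+
  then show ?thesis
    using assms by (intro exI[of _ J]) (simp add: le_log_iff log_less_iff)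
qed

lemma nn_integral_le_sum_cball:
  fixes c :: "'a::euclidean_space"
  assumes dom: "\<And>z. f z \<le> (\<Sum>j. ennreal (w j) * indicator (cball c (\<rho> j)) z)"
    and w: "\<And>j. 0 \<le> w j" and \<rho>: "\<And>j. 0 \<le> \<rho> j"
    and geom: "\<And>j. w j * \<rho> j ^ DIM('a) = K * q ^ j" and q: "0 \<le> q" "q < 1"
  shows "(\<integral>\<^sup>+z. f z \<partial>lborel) \<le> ennreal (unit_ball_vol DIM('a) * K / (1 - q))"
proof -
  define V where "V = unit_ball_vol DIM('a)"
  have K: "0 \<le> K"
    using geom[of 0] w[of 0] \<rho>[of 0] by (metis mult_nonneg_nonneg power_0 mult_1_right zero_le_power)
  have "(\<integral>\<^sup>+z. f z \<partial>lborel)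
      \<le> (\<integral>\<^sup>+z. (\<Sum>j. ennreal (w j) * indicator (cball c (\<rho> j)) z) \<partial>lborel)"
    by (rule nn_integral_mono) (rule dom)
  also have "\<dots> = (\<Sum>j. \<integral>\<^sup>+z. ennreal (w j) * indicator (cball c (\<rho> j)) z \<partial>lborel)"
    by (rule nn_integral_suminf) (measurable, auto simp: pred_def)
  also have "\<dots> = (\<Sum>j. ennreal (w j * (V * \<rho> j ^ DIM('a))))"
    using w \<rho> by (simp add: nn_integral_cmult_indicator emeasure_cball V_def ennreal_mult)
  also have "\<dots> = (\<Sum>j. ennreal (V * K * q ^ j))"
    by (simp add: mult.left_commute geom ac_simps)
  also have "\<dots> = ennreal (V * K / (1 - q))"
    using q K sums_mult[OF geometric_sums[of q], of "V * K"]
    by (intro suminf_ennreal_eq) (auto simp: V_def)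
  finally show ?thesis by (simp add: V_def)
qed

lemma dyadic_powr_mult_power:
  fixes R a b e :: real
  assumes "0 < R"
  shows "(R * 2 powr a) powr e * (R * 2 powr b) ^ n
    = R powr (real n + e) * 2 powr (a * e + b * real n)"
  using assms by (simp add: powr_realpow[symmetric] powr_mult powr_powr powr_add mult_ac)

lemma nn_integral_dist_powr_cball:
  fixes e :: real
  assumes e: "e < 0" and Ne: "0 < real DIM('a) + e"
  shows "\<exists>K>0. \<forall>c::'a::euclidean_space. \<forall>R>0.
    (\<integral>\<^sup>+z. ennreal (indicator (cball c R) z * dist z c powr e) \<partial>lborel)
      \<le> ennreal (K * R powr (real DIM('a) + e))"
proof (intro exI conjI allI impI)
  define N where "N = real DIM('a)"
  define q where "q = 2 powr (- (N + e))"
  have q: "0 < q" "q < 1" using Ne unfolding q_def N_def by (auto intro: powr_less_one)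
  show "0 < unit_ball_vol DIM('a) * 2 powr (- e) / (1 - q)" using q by simp
  fix c :: 'a and R :: real
  assume R: "0 < R"
  define \<rho> where "\<rho> j = R * 2 powr (- real j)" for j :: nat
  define w where "w j = (R * 2 powr (- real j - 1)) powr e" for j :: nat
  \<comment> \<open>\<open>w j\<close> bounds the kernel on the shell between \<open>\<rho> (j + 1)\<close> and \<open>\<rho> j\<close>\<close>
  have "(\<integral>\<^sup>+z. ennreal (indicator (cball c R) z * dist z c powr e) \<partial>lborel)
      \<le> ennreal (unit_ball_vol DIM('a) * (R powr (N + e) * 2 powr (- e)) / (1 - q))"
  proof (rule nn_integral_le_sum_cball)
    fix z
    show "ennreal (indicator (cball c R) z * dist z c powr e)
        \<le> (\<Sum>j. ennreal (w j) * indicator (cball c (\<rho> j)) z)"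
    proof (cases "z \<in> cball c R \<and> z \<noteq> c")
      case True
      define d where "d = dist z c"
      have d: "0 < d" "d \<le> R" using True by (auto simp: d_def dist_commute)
      then obtain J :: nat where J: "2 powr J \<le> R / d" "R / d < 2 powr (real J + 1)"
        using exists_dyadic_index[of "R / d"] by auto
      have "d \<le> \<rho> J" using J(1) d unfolding \<rho>_def by (simp add: powr_minus field_simps)
      moreover have "d powr e \<le> w J" unfolding w_def
        using J(2) d e R by (intro powr_mono2') (auto simp: powr_add powr_diff powr_minus field_simps)
      ultimately have "ennreal (indicator (cball c R) z * dist z c powr e)
          \<le> ennreal (w J) * indicator (cball c (\<rho> J)) z"
        using True by (auto simp: d_def dist_commute intro: ennreal_leI)
      also have "\<dots> \<le> (\<Sum>j. ennreal (w j) * indicator (cball c (\<rho> j)) z)"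
        using sum_le_suminf[OF summableI, of "{J}"] by simp
      finally show ?thesis .
    qed auto
  next
    show "w j * \<rho> j ^ DIM('a) = R powr (N + e) * 2 powr (- e) * q ^ j" for j
    proof -
      have "q ^ j = 2 powr (- (N + e) * j)"
        unfolding q_def by (simp add: powr_realpow[symmetric] powr_powr)
      then show ?thesis using R unfolding w_def \<rho>_def N_def
        by (simp add: dyadic_powr_mult_power mult.assoc flip: powr_add)
           (rule arg_cong[where f = "(powr) 2"], simp add: algebra_simps)
    qed
  qed (use q R in \<open>auto simp: w_def \<rho>_def\<close>)
  then show "(\<integral>\<^sup>+z. ennreal (indicator (cball c R) z * dist z c powr e) \<partial>lborel)
      \<le> ennreal (unit_ball_vol DIM('a) * 2 powr (- e) / (1 - q) * R powr (real DIM('a) + e))"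
    by (simp add: N_def mult_ac)
qed

lemma nn_integral_dist_powr_outside_cball:
  fixes e :: real
  assumes Ne: "real DIM('a) + e < 0"
  shows "\<exists>K>0. \<forall>c::'a::euclidean_space. \<forall>R>0.
    (\<integral>\<^sup>+z. ennreal (indicator (- cball c R) z * dist z c powr e) \<partial>lborel)
      \<le> ennreal (K * R powr (real DIM('a) + e))"
proof (intro exI conjI allI impI)
  define N where "N = real DIM('a)"
  define q where "q = 2 powr (N + e)"
  have q: "0 < q" "q < 1" using Ne unfolding q_def N_def by (auto intro: powr_less_one)
  show "0 < unit_ball_vol DIM('a) * 2 powr N / (1 - q)" using q by simp
  fix c :: 'a and R :: real
  assume R: "0 < R"
  define \<rho> where "\<rho> j = R * 2 powr (real j + 1)" for j :: nat
  define w where "w j = (R * 2 powr real j) powr e" for j :: nat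
  \<comment> \<open>\<open>w j\<close> bounds the kernel on the shell between \<open>R * 2 powr j\<close> and \<open>\<rho> j\<close>\<close>
  have "(\<integral>\<^sup>+z. ennreal (indicator (- cball c R) z * dist z c powr e) \<partial>lborel)
      \<le> ennreal (unit_ball_vol DIM('a) * (R powr (N + e) * 2 powr N) / (1 - q))"
  proof (rule nn_integral_le_sum_cball)
    fix z
    show "ennreal (indicator (- cball c R) z * dist z c powr e)
        \<le> (\<Sum>j. ennreal (w j) * indicator (cball c (\<rho> j)) z)"
    proof (cases "z \<in> cball c R")
      case False
      define d where "d = dist z c"
      have d: "R < d" using False by (auto simp: d_def dist_commute)
      then obtain J :: nat where J: "2 powr J \<le> d / R" "d / R < 2 powr (real J + 1)"
        using exists_dyadic_index[of "d / R"] R by auto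
      have "d \<le> \<rho> J" using J(2) R unfolding \<rho>_def by (simp add: field_simps)
      moreover have "d powr e \<le> w J" unfolding w_def
        using J(1) d Ne R by (intro powr_mono2') (auto simp: field_simps)
      ultimately have "ennreal (indicator (- cball c R) z * dist z c powr e)
          \<le> ennreal (w J) * indicator (cball c (\<rho> J)) z"
        using False by (auto simp: d_def dist_commute intro: ennreal_leI)
      also have "\<dots> \<le> (\<Sum>j. ennreal (w j) * indicator (cball c (\<rho> j)) z)"
        using sum_le_suminf[OF summableI, of "{J}"] by simp
      finally show ?thesis .
    qed auto
  next
    show "w j * \<rho> j ^ DIM('a) = R powr (N + e) * 2 powr N * q ^ j" for j
    proof -
      have "q ^ j = 2 powr ((N + e) * j)"
        unfolding q_def by (simp add: powr_realpow[symmetric] powr_powr)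
      then show ?thesis using R unfolding w_def \<rho>_def N_def
        by (simp add: dyadic_powr_mult_power mult.assoc flip: powr_add)
           (rule arg_cong[where f = "(powr) 2"], simp add: algebra_simps)
    qed
  qed (use q R in \<open>auto simp: w_def \<rho>_def\<close>)
  then show "(\<integral>\<^sup>+z. ennreal (indicator (- cball c R) z * dist z c powr e) \<partial>lborel)
      \<le> ennreal (unit_ball_vol DIM('a) * 2 powr N / (1 - q) * R powr (real DIM('a) + e))"
    by (simp add: N_def mult_ac)
qed

lemma dist_powr_mult_dist_powr_le:
  fixes p q z :: "'a::metric_space" and u v :: real
  assumes pq: "p \<noteq> q" and u: "u \<le> 0" and v: "v \<le> 0"
  defines "h \<equiv> dist p q / 2"
  shows "dist p z powr u * dist z q powr v
    \<le> h powr u * (indicator (cball q h) z * dist z q powr v)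
      + h powr v * (indicator (cball p h) z * dist z p powr u)
      + 3 powr (- u) * (indicator (- cball q h) z * dist z q powr (u + v))"
    (is "_ \<le> ?g1 + ?g2 + ?g3")
proof -
  have h: "0 < h" using pq by (simp add: h_def)
  have tri: "2 * h \<le> dist p z + dist z q" unfolding h_def using dist_triangle by simp
  have nn: "0 \<le> ?g1" "0 \<le> ?g2" "0 \<le> ?g3" by auto
  consider "dist z q \<le> h" | "dist z p \<le> h" | "h < dist z q" "h < dist z p" by linarith
  then show ?thesis
  proof cases
    case 1
    then have "dist p z powr u \<le> h powr u" using tri h u by (intro powr_mono2') auto
    then have "dist p z powr u * dist z q powr v \<le> ?g1"
      using 1 by (auto simp: dist_commute intro: mult_right_mono)
    then show ?thesis using nn by linarith
  next
    case 2
    then have "dist z q powr v \<le> h powr v"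
      using tri h v by (intro powr_mono2') (auto simp: dist_commute)
    then have "dist p z powr u * dist z q powr v \<le> dist p z powr u * h powr v"
      by (rule mult_left_mono) simp
    then have "dist p z powr u * dist z q powr v \<le> ?g2"
      using 2 by (simp add: dist_commute mult.commute)
    then show ?thesis using nn by linarith
  next
    case 3
    have "dist z q \<le> dist z p + 2 * h"
      unfolding h_def using dist_triangle[of z q p] by (simp add: dist_commute)
    then have "dist z q / 3 \<le> dist p z" using 3 by (simp add: dist_commute)
    then have "dist p z powr u \<le> (dist z q / 3) powr u" using 3 h u by (intro powr_mono2') auto
    also have "\<dots> = 3 powr (- u) * dist z q powr u"
      by (simp add: powr_divide powr_minus_divide)
    finally have "dist p z powr u * dist z q powr v
        \<le> 3 powr (- u) * dist z q powr u * dist z q powr v"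
      by (intro mult_right_mono) auto
    also have "\<dots> = ?g3" using 3 by (simp add: powr_add dist_commute)
    finally show ?thesis using nn by linarith
  qed
qed

lemma nn_integral_dist_powr_mult_dist_powr_le:
  fixes p q :: "'a::euclidean_space" and u v :: real
  assumes pq: "p \<noteq> q" and uv: "u \<le> 0" "v \<le> 0"
  defines "h \<equiv> dist p q / 2"
  shows "(\<integral>\<^sup>+z. ennreal (dist p z powr u * dist z q powr v) \<partial>lborel)
    \<le> ennreal (h powr u) * (\<integral>\<^sup>+z. ennreal (indicator (cball q h) z * dist z q powr v) \<partial>lborel)
      + ennreal (h powr v) * (\<integral>\<^sup>+z. ennreal (indicator (cball p h) z * dist z p powr u) \<partial>lborel)
      + ennreal (3 powr (- u))
        * (\<integral>\<^sup>+z. ennreal (indicator (- cball q h) z * dist z q powr (u + v)) \<partial>lborel)"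
proof -
  have [measurable]: "cball c r \<in> sets borel" "- cball c r \<in> sets borel" for c :: 'a and r
    by auto
  have "(\<integral>\<^sup>+z. ennreal (dist p z powr u * dist z q powr v) \<partial>lborel)
    \<le> (\<integral>\<^sup>+z. ennreal (h powr u) * ennreal (indicator (cball q h) z * dist z q powr v)
      + ennreal (h powr v) * ennreal (indicator (cball p h) z * dist z p powr u)
      + ennreal (3 powr (- u)) * ennreal (indicator (- cball q h) z * dist z q powr (u + v)) \<partial>lborel)"
    using dist_powr_mult_dist_powr_le[OF pq uv]
    by (intro nn_integral_mono) (simp add: h_def ennreal_leI flip: ennreal_plus ennreal_mult)
  then show ?thesis by (simp add: nn_integral_add nn_integral_cmult)
qed

lemma nn_integral_riesz_composition:
  fixes a b :: real
  assumes a: "0 < a" and b: "0 < b" and ab: "a + b < real DIM('a)"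
  shows "\<exists>K>0. \<forall>p q::'a::euclidean_space. p \<noteq> q \<longrightarrow>
    (\<integral>\<^sup>+z. ennreal (dist p z powr (a - DIM('a)) * dist z q powr (b - DIM('a))) \<partial>lborel)
      \<le> ennreal (K * dist p q powr (a + b - DIM('a)))"
proof -
  define N where "N = real DIM('a)"
  obtain K1 where K1: "K1 > 0" and int1: "\<And>c::'a. \<And>R. 0 < R \<Longrightarrow>
      (\<integral>\<^sup>+z. ennreal (indicator (cball c R) z * dist z c powr (b - N)) \<partial>lborel)
        \<le> ennreal (K1 * R powr b)"
    using nn_integral_dist_powr_cball[of "b - N", where 'a = 'a] a b ab by (auto simp: N_def)
  obtain K2 where K2: "K2 > 0" and int2: "\<And>c::'a. \<And>R. 0 < R \<Longrightarrow>
      (\<integral>\<^sup>+z. ennreal (indicator (cball c R) z * dist z c powr (a - N)) \<partial>lborel)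
        \<le> ennreal (K2 * R powr a)"
    using nn_integral_dist_powr_cball[of "a - N", where 'a = 'a] a b ab by (auto simp: N_def)
  obtain K3 where K3: "K3 > 0" and int3: "\<And>c::'a. \<And>R. 0 < R \<Longrightarrow>
      (\<integral>\<^sup>+z. ennreal (indicator (- cball c R) z * dist z c powr ((a - N) + (b - N))) \<partial>lborel)
        \<le> ennreal (K3 * R powr (a + b - N))"
    using nn_integral_dist_powr_outside_cball[of "(a - N) + (b - N)", where 'a = 'a] ab
    by (auto simp: N_def algebra_simps)
  have uv: "a - N \<le> 0" "b - N \<le> 0" using a b ab by (auto simp: N_def)
  define K where "K = (K1 + K2 + 3 powr (N - a) * K3) * 2 powr (N - a - b)"
  have "K > 0" using K1 K2 K3 by (simp add: K_def add_pos_pos)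
  moreover have "(\<integral>\<^sup>+z. ennreal (dist p z powr (a - N) * dist z q powr (b - N)) \<partial>lborel)
      \<le> ennreal (K * dist p q powr (a + b - N))" if pq: "p \<noteq> q" for p q :: 'a
  proof -
    define h where "h = dist p q / 2"
    have h: "0 < h" using pq by (simp add: h_def)
    have "(\<integral>\<^sup>+z. ennreal (dist p z powr (a - N) * dist z q powr (b - N)) \<partial>lborel)
      \<le> ennreal (h powr (a - N)) * ennreal (K1 * h powr b)
        + ennreal (h powr (b - N)) * ennreal (K2 * h powr a)
        + ennreal (3 powr (N - a)) * ennreal (K3 * h powr (a + b - N))"
      using nn_integral_dist_powr_mult_dist_powr_le[OF pq uv] int1[OF h] int2[OF h] int3[OF h]
      unfolding h_def[symmetric]
      by (auto intro!: add_mono mult_left_mono elim!: order.trans)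
    also have "\<dots> = ennreal ((K1 + K2 + 3 powr (N - a) * K3) * h powr (a + b - N))"
      using K1 K2 K3 h
      by (simp add: ennreal_mult[symmetric] ennreal_plus[symmetric] powr_add[symmetric] algebra_simps
          del: ennreal_plus)
    also have "h powr (a + b - N) = 2 powr (N - a - b) * dist p q powr (a + b - N)"
      using pq by (simp add: h_def powr_divide powr_diff powr_add)
    finally show ?thesis by (simp add: K_def mult.assoc)
  qed
  ultimately show ?thesis unfolding N_def by blast
qed

lemma dist_le_dist_refl_pt:
  fixes x z :: "real^'n"
  assumes "0 \<le> x $ k" "0 \<le> z $ k"
  shows "dist x z \<le> dist (refl_pt k x) z"
  unfolding dist_vec_def
proof (rule L2_set_mono)
  show "dist (x $ i) (z $ i) \<le> dist (refl_pt k x $ i) (z $ i)" for i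
    using assms by (cases "i = k") (auto simp: refl_pt_def dist_real_def)
qed simp

lemma c_const_pos: "0 < m \<Longrightarrow> 2 * real m < n \<Longrightarrow> 0 < c_const n m"
  unfolding c_const_def by (intro divide_pos_pos mult_pos_pos Gamma_real_pos) auto

lemma A_const_pos: "0 < \<alpha> \<Longrightarrow> \<alpha> < n \<Longrightarrow> 0 < A_const n \<alpha>"
  unfolding A_const_def by (intro divide_pos_pos mult_pos_pos Gamma_real_pos) auto

lemma B_const_nonneg: "0 \<le> \<alpha> \<Longrightarrow> \<alpha> \<le> 2 \<Longrightarrow> 0 \<le> B_const n \<alpha>"
  unfolding B_const_def by (intro divide_nonneg_pos sin_ge_zero) auto

lemma G2m_half_nonneg:
  assumes "x \<in> half_space k" "z \<in> half_space k" "x \<noteq> z" "0 < m" "2 * m < CARD('n)"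
  shows "0 \<le> G2m_half k m x (z :: real^'n)"
proof -
  have "dist x z \<le> dist (refl_pt k x) z"
    using assms by (intro dist_le_dist_refl_pt) (auto simp: half_space_def)
  then have "dist (refl_pt k x) z powr (2 * real m - CARD('n)) \<le> dist x z powr (2 * real m - CARD('n))"
    using assms by (intro powr_mono2') auto
  moreover have "0 < c_const CARD('n) m" using assms by (intro c_const_pos) auto
  ultimately show ?thesis unfolding G2m_half_def by simp
qed

lemma G2m_half_le:
  assumes "0 < m" "2 * m < CARD('n)"
  shows "G2m_half k m x (z :: real^'n) \<le> c_const CARD('n) m * dist x z powr (2 * real m - CARD('n))"
proof -
  have "0 < c_const CARD('n) m" using assms by (intro c_const_pos) auto
  then show ?thesis unfolding G2m_half_def by (simp add: mult_left_mono)
qed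

lemma Galpha_half_le:
  fixes z y :: "real^'n" and \<alpha> :: real
  assumes z: "z \<in> half_space k" and y: "y \<in> half_space k"
    and \<alpha>: "0 < \<alpha>" "\<alpha> < 2" "\<alpha> < CARD('n)"
  shows "Galpha_half k \<alpha> z y \<le> A_const CARD('n) \<alpha> * dist z y powr (\<alpha> - CARD('n))"
proof -
  define n where "n = real CARD('n)"
  define s where "s = (dist z y)\<^sup>2"
  define \<tau> where "\<tau> = 4 * (z $ k) * (y $ k)"
  define I where "I = (LBINT b=0..s/\<tau>. (s - \<tau> * b) powr ((n - 2) / 2) / (b powr (\<alpha>/2) * (1 + b)))"
  have \<tau>: "0 < \<tau>" using z y by (simp add: \<tau>_def half_space_def)
  have "0 \<le> I"
    unfolding I_def interval_lebesgue_integral_def set_lebesgue_integral_def using \<tau> s_def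
    by (auto intro!: integral_nonneg_AE AE_I2 simp: einterval_def indicator_def field_simps)
  define P where "P = A_const n \<alpha> / s powr ((n - \<alpha>) / 2)"
  define T where "T = B_const n \<alpha> / (s + \<tau>) powr ((n - 2) / 2) * I"
  have "0 \<le> T" using \<open>0 \<le> I\<close> \<alpha> B_const_nonneg[of \<alpha> n] by (simp add: T_def)
  moreover have "0 \<le> P" using \<alpha> A_const_pos[of \<alpha> n] by (simp add: P_def n_def)
  moreover have "Galpha_half k \<alpha> z y = P * (1 - T)"
    unfolding Galpha_half_def Let_def P_def T_def I_def s_def \<tau>_def n_def by simp
  ultimately have "Galpha_half k \<alpha> z y \<le> P" by (simp add: mult_left_le)
  also have "P = A_const n \<alpha> / dist z y powr (n - \<alpha>)"
    by (simp add: P_def s_def powr_numeral[of "dist z y", symmetric] del: powr_numeral)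
      (simp only: powr_powr times_divide_eq_right nonzero_mult_div_cancel_left zero_neq_numeral, simp)
  also have "A_const n \<alpha> / dist z y powr (n - \<alpha>) = A_const n \<alpha> * dist z y powr (\<alpha> - n)"
    using powr_minus_divide[of "dist z y" "n - \<alpha>"] by simp
  finally show ?thesis by (simp add: n_def)
qed

lemma G2m_half_mult_Galpha_half_le:
  fixes x z y :: "real^'n" and \<alpha> :: real
  assumes H: "x \<in> half_space k" "z \<in> half_space k" "y \<in> half_space k" and "x \<noteq> z"
    and m: "0 < m" "2 * m < CARD('n)" and \<alpha>: "0 < \<alpha>" "\<alpha> < 2" "\<alpha> < CARD('n)"
  shows "G2m_half k m x z * Galpha_half k \<alpha> z y
    \<le> c_const CARD('n) m * A_const CARD('n) \<alpha>
      * (dist x z powr (2 * real m - CARD('n)) * dist z y powr (\<alpha> - CARD('n)))"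
proof -
  have "G2m_half k m x z * Galpha_half k \<alpha> z y
      \<le> G2m_half k m x z * (A_const CARD('n) \<alpha> * dist z y powr (\<alpha> - CARD('n)))"
    using assms by (intro mult_left_mono G2m_half_nonneg Galpha_half_le) auto
  also have "\<dots> \<le> c_const CARD('n) m * dist x z powr (2 * real m - CARD('n))
      * (A_const CARD('n) \<alpha> * dist z y powr (\<alpha> - CARD('n)))"
    using \<alpha> A_const_pos[of \<alpha> "CARD('n)"] m by (intro mult_right_mono G2m_half_le) auto
  finally show ?thesis by (simp only: mult_ac)
qed

lemma G2t_half_le:
  fixes x y :: "real^'n" and \<alpha> B :: real
  assumes x: "x \<in> half_space k" and y: "y \<in> half_space k"
    and m: "0 < m" "2 * m < CARD('n)" and \<alpha>: "0 < \<alpha>" "\<alpha> < 2" "\<alpha> < CARD('n)"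
    and B: "0 \<le> B"
      "(\<integral>\<^sup>+z. ennreal (dist x z powr (2 * real m - CARD('n)) * dist z y powr (\<alpha> - CARD('n))) \<partial>lborel)
        \<le> ennreal B"
  shows "G2t_half k m \<alpha> x y \<le> c_const CARD('n) m * A_const CARD('n) \<alpha> * B"
proof -
  define cA where "cA = c_const CARD('n) m * A_const CARD('n) \<alpha>"
  have cA: "0 \<le> cA"
    unfolding cA_def using m \<alpha> by (intro mult_nonneg_nonneg less_imp_le c_const_pos A_const_pos) auto
  have "AE z in lborel. ennreal (indicator (half_space k) z *\<^sub>R (G2m_half k m x z * Galpha_half k \<alpha> z y))
      \<le> ennreal cA * ennreal (dist x z powr (2 * real m - CARD('n)) * dist z y powr (\<alpha> - CARD('n)))"
    using AE_lborel_singleton[of x]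
    \<comment> \<open>at \<open>z = x\<close> the junk value \<open>0 powr e = 0\<close> makes \<open>G2m_half\<close> negative\<close>
  proof eventually_elim
    case (elim z)
    then show ?case
      using G2m_half_mult_Galpha_half_le[OF x _ y _ m \<alpha>, of z] cA
      by (auto simp: cA_def indicator_def ennreal_mult[symmetric] intro!: ennreal_leI)
  qed
  then have "(\<integral>\<^sup>+z. ennreal (indicator (half_space k) z *\<^sub>R (G2m_half k m x z * Galpha_half k \<alpha> z y)) \<partial>lborel)
      \<le> ennreal cA * (\<integral>\<^sup>+z. ennreal (dist x z powr (2 * real m - CARD('n)) * dist z y powr (\<alpha> - CARD('n))) \<partial>lborel)"
    by (subst nn_integral_cmult[symmetric]) (auto intro: nn_integral_mono_AE)
  also have "\<dots> \<le> ennreal (cA * B)"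
    using B cA by (simp add: ennreal_mult mult_left_mono)
  finally show ?thesis
    unfolding G2t_half_def set_lebesgue_integral_def cA_def[symmetric]
    using B cA by (intro integral_real_bounded) auto
qed

theorem lemma2p1:
  fixes k :: "'n::finite" and m :: nat and \<alpha> :: real
  assumes "CARD('n) \<ge> 2" and "m \<ge> 1" and "2 * m < CARD('n)"
    and "0 < \<alpha>" and "\<alpha> < 2"
    and "real m + \<alpha> / 2 < real CARD('n) / 2"
  shows "\<exists>C>0. \<forall>x\<in>half_space k. \<forall>y\<in>half_space k. x \<noteq> y \<longrightarrow>
           G2t_half k m \<alpha> x y \<le> C / dist x y powr (real CARD('n) - 2 * (real m + \<alpha> / 2))"
proof -
  obtain K where K: "0 < K" and riesz: "\<And>x y :: real^'n. x \<noteq> y \<Longrightarrow>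
      (\<integral>\<^sup>+z. ennreal (dist x z powr (2 * real m - CARD('n)) * dist z y powr (\<alpha> - CARD('n))) \<partial>lborel)
        \<le> ennreal (K * dist x y powr (2 * real m + \<alpha> - CARD('n)))"
    using nn_integral_riesz_composition[of "2 * real m" \<alpha>, where 'a = "real^'n"] assms by auto
  define C where "C = c_const CARD('n) m * A_const CARD('n) \<alpha> * K"
  have "0 < C" unfolding C_def using assms K by (intro mult_pos_pos c_const_pos A_const_pos) auto
  moreover have "G2t_half k m \<alpha> x y \<le> C / dist x y powr (real CARD('n) - 2 * (real m + \<alpha> / 2))"
    if "x \<in> half_space k" "y \<in> half_space k" "x \<noteq> y" for x y
  proof -
    have "G2t_half k m \<alpha> x y
        \<le> c_const CARD('n) m * A_const CARD('n) \<alpha> * (K * dist x y powr (2 * real m + \<alpha> - CARD('n)))"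
      using that assms K by (intro G2t_half_le riesz) auto
    also have "\<dots> = C / dist x y powr (real CARD('n) - 2 * (real m + \<alpha> / 2))"
      using powr_minus_divide[of "dist x y" "real CARD('n) - 2 * (real m + \<alpha> / 2)"]
      by (simp add: C_def algebra_simps)
    finally show ?thesis .
  qed
  ultimately show ?thesis by blast
qed
end
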